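(* Let $N\ge1$, $m_c>0$, $0<m\le 1$, $k=Tr^{\alpha}>0$, $\lambda_1,\dots,\lambda_N>0$, $\mathbf{D}=\mathrm{diag}(\lambda_1,\dots,\lambda_N)$, $\mathbf{C}$ an $N\times N$ symmetric positive definite matrix with unit diagonal, and $\hat\lambda_1,\dots,\hat\lambda_N$ the eigenvalues of $\mathbf{D}\mathbf{C}$. Define $$C_p=\frac{\Gamma(Nm_c+m)}{\Gamma(Nm_c+1)\Gamma(m)}\prod_{i=1}^{N}\left(\frac{1}{km\lambda_i+1}\right)^{m_c} F_D^{(N)}\!\left[1-m,m_c,\dots,m_c;Nm_c+1;\tfrac{1}{km\lambda_1+1},\dots,\tfrac{1}{km\lambda_N+1}\right]$$ and $\hat C_p$ by the same formula with every $\lambda_i$ replaced by $\hat\lambda_i$. Then $\hat C_p\ge C_p$; that is, when the user's Nakagami shape parameter satisfies $m\le1$, the coverage probability with correlated interferers is at least that with independent interferers.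
   Context: $F_D^{(N)}$ is Lauricella's fourth hypergeometric function: $F_D^{(N)}[a,b_1,\dots,b_N;c;x_1,\dots,x_N]=\sum_{i_1,\dots,i_N\ge0}\frac{(a)_{i_1+\dots+i_N}(b_1)_{i_1}\cdots(b_N)_{i_N}}{(c)_{i_1+\dots+i_N}}\frac{x_1^{i_1}}{i_1!}\cdots\frac{x_N^{i_N}}{i_N!}$ for $\max|x_j|<1$, with $(a)_n=\Gamma(a+n)/\Gamma(a)$. Interpretation: $C_p=P(g\ge k I)$ where $g\sim$ Gamma with shape $m$ and scale $1/m$ (user's Nakagami-$m$ channel power), $I=\sum_i\lambda_iG_i$ with $G_i$ i.i.d. Gamma$(m_c,1)$ independent of $g$, and $\hat C_p$ is the same with $\hat\lambda_i$ (correlated interferers); $\lambda_i=d_i^{-\alpha}/m_c$ and $\mathbf{C}$ has off-diagonal entries $\sqrt{\rho_{ij}}$, $\rho_{ij}\in[0,1]$. *)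

theory Defs
  imports "HOL-Analysis.Analysis"
begin

text \<open>Lauricella's fourth hypergeometric function F_D^(N), with N = CARD('n):
  the (absolutely convergent, for max |x_j| < 1) sum over all multi-indices i.\<close>
definition lauricella_FD :: "real \<Rightarrow> ('n::finite \<Rightarrow> real) \<Rightarrow> real \<Rightarrow> ('n \<Rightarrow> real) \<Rightarrow> real" where
  "lauricella_FD a b c x =
     (\<Sum>\<^sub>\<infinity> i \<in> (UNIV :: ('n \<Rightarrow> nat) set).
        pochhammer a (\<Sum>j\<in>UNIV. i j) / pochhammer c (\<Sum>j\<in>UNIV. i j)
        * (\<Prod>j\<in>UNIV. pochhammer (b j) (i j) * x j ^ i j / fact (i j)))"

definition coverage :: "real \<Rightarrow> real \<Rightarrow> real \<Rightarrow> real^'n::finite \<Rightarrow> real" where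
  "coverage mc m k lam =
     Gamma (real CARD('n) * mc + m) / (Gamma (real CARD('n) * mc + 1) * Gamma m)
     * (\<Prod>i\<in>UNIV. (1 / (k * m * lam$i + 1)) powr mc)
     * lauricella_FD (1 - m) (\<lambda>_. mc) (real CARD('n) * mc + 1)
         (\<lambda>i. 1 / (k * m * lam$i + 1))"

definition diag_mat :: "real^'n \<Rightarrow> real^'n^'n" where
  "diag_mat lam = (\<chi> i j. if i = j then lam$i else 0)"

end

theory Submission
  imports Defs
begin

text \<open>For \<open>m < 1\<close>, Euler's integral for \<open>F_D\<close> turns the coverage probability into
  \<open>1 / (\<Gamma>(m) \<Gamma>(1 - m)) \<cdot> \<integral> t^(-m) (1 - t)^(N mc + m - 1) P(1 - t)^(-mc) dt\<close> over \<open>[0, 1]\<close>,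
  where \<open>P(u) = \<Prod>j. u + k m \<lambda>j\<close>; for \<open>m = 1\<close> it is \<open>P(1)^(-mc)\<close>. Either way it can only grow
  when every \<open>P(u)\<close>, \<open>u \<ge> 0\<close>, shrinks. With the eigenvalues of \<open>D C\<close> in place of the \<open>\<lambda>j\<close>,
  \<open>P(u) = det (u I + s D C) = det D \<cdot> det (u D\<inverse> + s C)\<close> with \<open>s = k m\<close>, and \<open>u D\<inverse> + s C\<close> is
  symmetric positive definite with diagonal \<open>u / \<lambda>j + s\<close>, so Hadamard's inequality bounds it by the
  original \<open>P(u)\<close>.\<close>

section \<open>Hadamard's inequality\<close>

definition pos_definite :: "real^'n::finite^'n \<Rightarrow> bool" where
  "pos_definite M \<longleftrightarrow> (\<forall>x. x \<noteq> 0 \<longrightarrow> 0 < x \<bullet> (M *v x))"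

text \<open>The identity block on the complement of \<open>S\<close> lets principal submatrices keep the type of \<open>M\<close>.\<close>
definition principal_padded :: "real^'n::finite^'n \<Rightarrow> 'n set \<Rightarrow> real^'n^'n" where
  "principal_padded M S = (\<chi> i j. if i \<in> S \<and> j \<in> S then M$i$j else if i = j then 1 else 0)"

lemma symmetric_matrix_nth: "transpose M = M \<Longrightarrow> M$i$j = M$j$i"
  by (metis transpose_def vec_lambda_beta)

lemma inner_matrix_vector_mult_eq_double_sum:
  "x \<bullet> (M *v x) = (\<Sum>i\<in>UNIV. \<Sum>j\<in>UNIV. x$i * M$i$j * x$j)"
  by (simp add: inner_vec_def matrix_vector_mult_def sum_distrib_left mult_ac)

lemma matrix_vector_mult_nth_vanishing_outside:
  assumes "\<And>j. j \<notin> S \<Longrightarrow> v$j = 0"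
  shows "(M *v v)$i = (\<Sum>j\<in>S. M$i$j * v$j)"
  unfolding matrix_vector_mult_def using assms
  by (simp add: sum.mono_neutral_right[of UNIV S])

lemma pos_definite_nonneg: "pos_definite M \<Longrightarrow> 0 \<le> x \<bullet> (M *v x)"
  unfolding pos_definite_def by (cases "x = 0") (auto intro: less_imp_le)

lemma pos_definite_invertible:
  assumes "pos_definite M"
  shows "invertible M"
proof -
  have "M *v x = 0 \<Longrightarrow> x = 0" for x
    using assms unfolding pos_definite_def by (metis inner_zero_right less_irrefl)
  then show ?thesis
    using matrix_left_invertible_ker invertible_left_inverse by blast
qed

lemma pos_definite_principal_padded:
  fixes M :: "real^'n::finite^'n"
  assumes "pos_definite M"
  shows "pos_definite (principal_padded M S)"
  unfolding pos_definite_def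
proof (intro allI impI)
  fix x :: "real^'n" assume x: "x \<noteq> 0"
  define y where "y = (\<chi> i. if i \<in> S then x$i else 0)"
  define r where "r = (\<Sum>i\<in>UNIV. if i \<in> S then 0 else (x$i)\<^sup>2)"
  have row: "(\<Sum>j\<in>UNIV. x$i * principal_padded M S$i$j * x$j) =
      (\<Sum>j\<in>UNIV. y$i * M$i$j * y$j) + (if i \<in> S then 0 else (x$i)\<^sup>2)" for i
  proof (cases "i \<in> S")
    case True
    then show ?thesis by (auto intro!: sum.cong simp: principal_padded_def y_def)
  next
    case False
    then have "(\<Sum>j\<in>UNIV. x$i * principal_padded M S$i$j * x$j) =
        (\<Sum>j\<in>UNIV. if j = i then x$i * x$i else 0)"
      by (intro sum.cong) (auto simp: principal_padded_def)
    then show ?thesis using False by (simp add: y_def power2_eq_square)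
  qed
  have "x \<bullet> (principal_padded M S *v x) = y \<bullet> (M *v y) + r"
    unfolding inner_matrix_vector_mult_eq_double_sum r_def by (simp add: row sum.distrib)
  moreover have "0 < y \<bullet> (M *v y) + r"
  proof (cases "y = 0")
    case False
    then show ?thesis
      using assms unfolding pos_definite_def r_def
      by (smt (verit) sum_nonneg zero_le_power2)
  next
    case True
    from x obtain i where "x$i \<noteq> 0" by (metis vec_eq_iff zero_index)
    moreover from this True have "i \<notin> S" by (auto simp: y_def vec_eq_iff split: if_splits)
    ultimately have "0 < r" unfolding r_def by (intro sum_pos2[of _ i]) auto
    then show ?thesis using True by simp
  qed
  ultimately show "0 < x \<bullet> (principal_padded M S *v x)" by simp
qed

lemma det_unit_row_clear_column:
  fixes A :: "real^'n::finite^'n"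
  assumes "\<And>j. A$k$j = (if j = k then 1 else 0)"
  shows "det A = det (\<chi> i j. if j = k then (if i = k then 1 else 0) else A$i$j)"
  unfolding det_def
proof (rule sum.cong[OF refl])
  fix p assume "p \<in> {p. p permutes (UNIV::'n set)}"
  then have p: "p permutes (UNIV::'n set)" by simp
  let ?B = "(\<chi> i j. if j = k then (if i = k then 1 else 0) else A$i$j) :: real^'n^'n"
  show "of_int (sign p) * (\<Prod>i\<in>UNIV. A$i$p i) = of_int (sign p) * (\<Prod>i\<in>UNIV. ?B$i$p i)"
  proof (cases "p k = k")
    case True
    have "A$i$p i = ?B$i$p i" for i
    proof (cases "i = k")
      case False
      then have "p i \<noteq> k" using True permutes_inj[OF p] by (metis injD)
      then show ?thesis by simp
    qed (use True assms in simp)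
    then show ?thesis by simp
  next
    case False
    then have "A$k$p k = 0" "?B$k$p k = 0" using assms by auto
    then have zero: "(\<Prod>i\<in>UNIV. A$i$p i) = 0" "(\<Prod>i\<in>UNIV. ?B$i$p i) = 0"
      by (meson UNIV_I finite prod_zero)+
    show ?thesis unfolding zero by simp
  qed
qed

text \<open>One step of Gaussian elimination: subtracting from row \<open>k\<close> the combination of the rows in
  \<open>S\<close> with coefficients \<open>v\<close> leaves the Schur complement as the only entry of that row.\<close>
lemma det_principal_padded_insert:
  fixes M :: "real^'n::finite^'n"
  assumes sym: "transpose M = M" and "k \<notin> S"
    and v_out: "\<And>j. j \<notin> S \<Longrightarrow> v$j = 0" and v_eq: "\<And>j. j \<in> S \<Longrightarrow> (M *v v)$j = M$j$k"
  shows "det (principal_padded M (insert k S)) =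
    (M$k$k - (\<Sum>j\<in>S. v$j * M$j$k)) * det (principal_padded M S)"
proof -
  define A where "A = principal_padded M (insert k S)"
  define d where "d = M$k$k - (\<Sum>j\<in>S. v$j * M$j$k)"
  define x where "x = - (\<Sum>j\<in>S. v$j *s row j A)"
  have "x \<in> vec.span {row j A |j. j \<noteq> k}"
    unfolding x_def using \<open>k \<notin> S\<close>
    by (intro vec.span_neg vec.span_sum vec.span_scale vec.span_base) auto
  then have "det A = det (\<chi> i. if i = k then row k A + x else row i A)"
    by (rule det_row_span[symmetric])
  also have "row k A + x = d *s axis k 1"
  proof (rule vec_eq_iff[THEN iffD2, rule_format])
    fix l
    have x_l: "x$l = - (\<Sum>j\<in>S. v$j * A$j$l)"
      by (simp add: x_def row_def sum_component)
    consider "l = k" | "l \<in> S" | "l \<notin> S" "l \<noteq> k" by blast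
    then show "(row k A + x)$l = (d *s axis k 1)$l"
    proof cases
      case 1
      then have "(\<Sum>j\<in>S. v$j * A$j$l) = (\<Sum>j\<in>S. v$j * M$j$k)"
        by (intro sum.cong) (auto simp: A_def principal_padded_def)
      then show ?thesis using 1 x_l by (simp add: row_def A_def principal_padded_def d_def axis_def)
    next
      case 2
      have "v$j * A$j$l = M$l$j * v$j" if "j \<in> S" for j
        using that 2 symmetric_matrix_nth[OF sym, of j l] by (simp add: A_def principal_padded_def)
      then have "(\<Sum>j\<in>S. v$j * A$j$l) = (\<Sum>j\<in>S. M$l$j * v$j)"
        by (rule sum.cong[OF refl])
      also have "\<dots> = (M *v v)$l"
        by (rule matrix_vector_mult_nth_vanishing_outside[OF v_out, symmetric])
      also have "\<dots> = M$k$l"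
        using v_eq[OF 2] symmetric_matrix_nth[OF sym, of l k] by simp
      finally show ?thesis
        using 2 \<open>k \<notin> S\<close> x_l by (auto simp: row_def A_def principal_padded_def axis_def)
    next
      case 3
      then have "(\<Sum>j\<in>S. v$j * A$j$l) = 0"
        by (intro sum.neutral) (auto simp: A_def principal_padded_def)
      then show ?thesis using 3 x_l by (simp add: row_def A_def principal_padded_def axis_def)
    qed
  qed
  also have "det (\<chi> i. if i = k then d *s axis k 1 else row i A) =
      d * det (\<chi> i. if i = k then axis k 1 else row i A)"
    by (rule det_row_mul)
  also have "det (\<chi> i. if i = k then axis k (1::real) else row i A) = det (principal_padded M S)"
  proof -
    have "(\<chi> i j. if j = k then (if i = k then 1 else 0)
            else (\<chi> i. if i = k then axis k (1::real) else row i A)$i$j) = principal_padded M S"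
      using \<open>k \<notin> S\<close> by (auto simp: vec_eq_iff A_def principal_padded_def row_def axis_def)
    then show ?thesis by (subst det_unit_row_clear_column[where k=k]) (auto simp: axis_def)
  qed
  finally show ?thesis by (simp add: A_def d_def)
qed

lemma principal_padded_solvable:
  fixes M :: "real^'n::finite^'n"
  assumes "pos_definite M"
  obtains v where "\<And>j. j \<notin> S \<Longrightarrow> v$j = 0" and "\<And>j. j \<in> S \<Longrightarrow> (M *v v)$j = M$j$k"
proof -
  define B where "B = principal_padded M S"
  obtain B' where B': "B ** B' = mat 1"
    using pos_definite_invertible[OF pos_definite_principal_padded[OF assms]]
    unfolding invertible_def B_def by blast
  define b where "b = (\<chi> j. if j \<in> S then M$j$k else 0)"
  define v where "v = B' *v b"
  have Bv: "B *v v = b"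
    by (simp add: v_def matrix_vector_mul_assoc B')
  have v_out: "v$j = 0" if "j \<notin> S" for j
  proof -
    have "(B *v v)$j = v$j"
      using that by (simp add: matrix_vector_mult_def B_def principal_padded_def
          if_distrib[where f="\<lambda>c. c * _"] cong: if_cong)
    then show ?thesis using Bv that by (simp add: b_def)
  qed
  have "(M *v v)$j = M$j$k" if "j \<in> S" for j
  proof -
    have "(M *v v)$j = (B *v v)$j"
      using that by (simp add: matrix_vector_mult_nth_vanishing_outside[OF v_out]
          B_def principal_padded_def)
    then show ?thesis using Bv that by (simp add: b_def)
  qed
  with v_out show thesis by (rule that)
qed

lemma schur_complement_bounds:
  fixes M :: "real^'n::finite^'n"
  assumes sym: "transpose M = M" and pd: "pos_definite M" and "k \<notin> S"
    and v_out: "\<And>j. j \<notin> S \<Longrightarrow> v$j = 0" and v_eq: "\<And>j. j \<in> S \<Longrightarrow> (M *v v)$j = M$j$k"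
  shows "0 < M$k$k - (\<Sum>j\<in>S. v$j * M$j$k)" and "M$k$k - (\<Sum>j\<in>S. v$j * M$j$k) \<le> M$k$k"
proof -
  have "v \<bullet> (M *v v) = (\<Sum>j\<in>S. v$j * (M *v v)$j)"
    unfolding inner_vec_def inner_real_def using v_out by (intro sum.mono_neutral_right) auto
  then have vMv: "(\<Sum>j\<in>S. v$j * M$j$k) = v \<bullet> (M *v v)"
    using v_eq by simp
  then show "M$k$k - (\<Sum>j\<in>S. v$j * M$j$k) \<le> M$k$k"
    using pos_definite_nonneg[OF pd] by simp
  \<comment> \<open>The Schur complement is the quadratic form of \<open>M\<close> at \<open>e\<^sub>k - v\<close>.\<close>
  define z where "z = axis k 1 - v"
  have z_k: "z$k = 1" using v_out[OF \<open>k \<notin> S\<close>] by (simp add: z_def axis_def)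
  have Mz: "(M *v z)$i = M$i$k - (M *v v)$i" for i
    by (simp add: z_def matrix_vector_mult_def axis_def right_diff_distrib sum_subtractf
        if_distrib[where f="\<lambda>c. _ * c"] cong: if_cong)
  have "z$i * (M *v z)$i = (if i = k then (M *v z)$k else 0)" for i
    using Mz[of i] v_eq[of i] v_out[of i] z_k by (cases "i \<in> S") (auto simp: z_def axis_def)
  then have "z \<bullet> (M *v z) = (M *v z)$k"
    unfolding inner_vec_def by simp
  also have "\<dots> = M$k$k - (\<Sum>j\<in>S. v$j * M$j$k)"
    using Mz[of k] symmetric_matrix_nth[OF sym]
    by (simp add: matrix_vector_mult_nth_vanishing_outside[OF v_out] mult.commute)
  finally show "0 < M$k$k - (\<Sum>j\<in>S. v$j * M$j$k)"
    using pd z_k unfolding pos_definite_def by (metis zero_index zero_neq_one)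
qed

theorem hadamard_inequality:
  fixes M :: "real^'n::finite^'n"
  assumes sym: "transpose M = M" and pd: "pos_definite M"
  shows "0 < det M" and "det M \<le> (\<Prod>i\<in>UNIV. M$i$i)"
proof -
  have "0 < det (principal_padded M S) \<and> det (principal_padded M S) \<le> (\<Prod>i\<in>S. M$i$i)" for S
  proof (induction S rule: infinite_finite_induct)
    case empty
    have "principal_padded M {} = mat 1" by (simp add: principal_padded_def vec_eq_iff mat_def)
    then show ?case by simp
  next
    case (insert k S)
    obtain v where v: "\<And>j. j \<notin> S \<Longrightarrow> v$j = 0" "\<And>j. j \<in> S \<Longrightarrow> (M *v v)$j = M$j$k"
      using principal_padded_solvable[OF pd] by blast
    have "det (principal_padded M (insert k S)) =
        (M$k$k - (\<Sum>j\<in>S. v$j * M$j$k)) * det (principal_padded M S)"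
      by (rule det_principal_padded_insert[OF sym insert(2) v])
    then show ?case
      using schur_complement_bounds[OF sym pd insert(2) v] insert(1,2,3) by (auto intro: mult_mono)
  qed simp
  moreover have "principal_padded M UNIV = M" by (simp add: principal_padded_def vec_eq_iff)
  ultimately show "0 < det M" "det M \<le> (\<Prod>i\<in>UNIV. M$i$i)" by metis+
qed

section \<open>Eigenvalues of \<open>D C\<close>\<close>

lemma diag_mat_nth: "diag_mat d $ i $ j = (if i = j then d$i else 0)"
  by (simp add: diag_mat_def)

lemma diag_mat_mult_nth: "(diag_mat d ** A)$i$j = d$i * A$i$j"
  by (simp add: matrix_matrix_mult_def diag_mat_def if_distrib[where f="\<lambda>c. c * _"] cong: if_cong)

lemma det_diag_mat: "det (diag_mat d) = (\<Prod>i\<in>UNIV. d$i)"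
  by (subst det_diagonal) (auto simp: diag_mat_def)

lemma det_scaleR_matrix:
  fixes A :: "real^'n::finite^'n"
  shows "det (c *\<^sub>R A) = c ^ CARD('n) * det A"
proof -
  have "c *\<^sub>R A = (\<chi> i. c *s A$i)" by (simp add: vec_eq_iff)
  then show ?thesis by (simp add: det_rows_mul)
qed

lemma pos_definite_diag_mat_add:
  fixes C :: "real^'n::finite^'n"
  assumes "\<And>i. 0 \<le> d$i" and "pos_definite C" and "0 < s"
  shows "pos_definite (diag_mat d + s *\<^sub>R C)"
  unfolding pos_definite_def
proof (intro allI impI)
  fix x :: "real^'n" assume "x \<noteq> 0"
  have "diag_mat d *v x = (\<chi> i. d$i * x$i)"
    by (simp add: vec_eq_iff matrix_vector_mult_def diag_mat_def if_distrib[where f="\<lambda>c. c * _"]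
        cong: if_cong)
  then have "x \<bullet> (diag_mat d *v x) = (\<Sum>i\<in>UNIV. d$i * (x$i)\<^sup>2)"
    by (simp add: inner_vec_def power2_eq_square mult_ac)
  also have "\<dots> \<ge> 0" using assms(1) by (intro sum_nonneg) simp
  finally have "0 \<le> x \<bullet> (diag_mat d *v x)" .
  moreover have "0 < s * (x \<bullet> (C *v x))"
    using assms(2,3) \<open>x \<noteq> 0\<close> unfolding pos_definite_def by simp
  ultimately show "0 < x \<bullet> ((diag_mat d + s *\<^sub>R C) *v x)"
    by (simp add: matrix_vector_mult_add_rdistrib inner_add_right scaleR_matrix_vector_assoc[symmetric])
qed

lemma det_shift_eq_prod_eigenvalues:
  fixes A :: "real^'n::finite^'n" and \<mu> :: "real^'n"
  assumes charpoly: "\<And>t. det (t *\<^sub>R mat 1 - A) = (\<Prod>i\<in>UNIV. t - \<mu>$i)" and "s \<noteq> 0"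
  shows "det (u *\<^sub>R mat 1 + s *\<^sub>R A) = (\<Prod>i\<in>UNIV. u + s * \<mu>$i)"
proof -
  have "det (u *\<^sub>R mat 1 + s *\<^sub>R A) = det ((- s) *\<^sub>R ((- u / s) *\<^sub>R mat 1 - A))"
    using \<open>s \<noteq> 0\<close> by (simp add: algebra_simps)
  also have "\<dots> = (- s) ^ CARD('n) * (\<Prod>i\<in>UNIV. - u / s - \<mu>$i)"
    by (simp only: det_scaleR_matrix charpoly)
  also have "\<dots> = (\<Prod>i\<in>UNIV. (- s) * (- u / s - \<mu>$i))"
    by (simp only: prod.distrib prod_constant)
  also have "\<dots> = (\<Prod>i\<in>UNIV. u + s * \<mu>$i)"
    using \<open>s \<noteq> 0\<close> by (intro prod.cong) (auto simp: field_simps)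
  finally show ?thesis .
qed

lemma det_shift_diag_mat_mult_bounds:
  fixes C :: "real^'n::finite^'n"
  assumes lam: "\<And>i. 0 < lam$i" and sym: "transpose C = C" and pd: "pos_definite C"
    and "0 \<le> u" and "0 < s"
  shows "0 < det (u *\<^sub>R mat 1 + s *\<^sub>R (diag_mat lam ** C))"
    and "det (u *\<^sub>R mat 1 + s *\<^sub>R (diag_mat lam ** C)) \<le> (\<Prod>i\<in>UNIV. u + s * lam$i * C$i$i)"
proof -
  define M where "M = diag_mat (\<chi> i. u / lam$i) + s *\<^sub>R C"
  have "M$i$j = M$j$i" for i j
    using symmetric_matrix_nth[OF sym, of i j] by (simp add: M_def diag_mat_def)
  then have "transpose M = M" by (simp add: transpose_def vec_eq_iff)
  moreover have "pos_definite M"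
    unfolding M_def using assms by (intro pos_definite_diag_mat_add) (auto intro!: divide_nonneg_pos)
  ultimately have M: "0 < det M" "det M \<le> (\<Prod>i\<in>UNIV. M$i$i)"
    by (rule hadamard_inequality)+
  have cancel: "lam$i * (u / lam$i) = u" for i
    using lam[of i] by simp
  have "(u *\<^sub>R mat 1 + s *\<^sub>R (diag_mat lam ** C))$i$j = (diag_mat lam ** M)$i$j" for i j
    using lam[of j] by (simp add: M_def diag_mat_mult_nth diag_mat_nth mat_def distrib_left cancel)
  then have "u *\<^sub>R mat 1 + s *\<^sub>R (diag_mat lam ** C) = diag_mat lam ** M"
    by (simp add: vec_eq_iff)
  then have det_eq: "det (u *\<^sub>R mat 1 + s *\<^sub>R (diag_mat lam ** C)) = (\<Prod>i\<in>UNIV. lam$i) * det M"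
    by (simp add: det_mul det_diag_mat)
  have lam_prod: "0 < (\<Prod>i\<in>UNIV. lam$i)" using lam by (intro prod_pos) auto
  then show "0 < det (u *\<^sub>R mat 1 + s *\<^sub>R (diag_mat lam ** C))"
    unfolding det_eq using M by simp
  have "(\<Prod>i\<in>UNIV. lam$i) * det M \<le> (\<Prod>i\<in>UNIV. lam$i) * (\<Prod>i\<in>UNIV. M$i$i)"
    using M lam_prod by simp
  also have "\<dots> = (\<Prod>i\<in>UNIV. u + s * lam$i * C$i$i)"
    unfolding prod.distrib[symmetric]
    using cancel by (intro prod.cong refl) (simp add: M_def diag_mat_nth algebra_simps)
  finally show "det (u *\<^sub>R mat 1 + s *\<^sub>R (diag_mat lam ** C)) \<le> (\<Prod>i\<in>UNIV. u + s * lam$i * C$i$i)"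
    unfolding det_eq .
qed

lemma prod_shift_eigenvalues_le:
  fixes lam \<mu> :: "real^'n::finite" and C :: "real^'n^'n"
  assumes lam: "\<And>i. 0 < lam$i" and sym: "transpose C = C" and pd: "pos_definite C"
    and C_diag: "\<And>i. C$i$i = 1"
    and charpoly: "\<And>t. det (t *\<^sub>R mat 1 - diag_mat lam ** C) = (\<Prod>i\<in>UNIV. t - \<mu>$i)"
    and "0 \<le> u" and "0 < s"
  shows "0 < (\<Prod>i\<in>UNIV. u + s * \<mu>$i)" and "(\<Prod>i\<in>UNIV. u + s * \<mu>$i) \<le> (\<Prod>i\<in>UNIV. u + s * lam$i)"
  using det_shift_diag_mat_mult_bounds[OF lam sym pd \<open>0 \<le> u\<close> \<open>0 < s\<close>] C_diag
    det_shift_eq_prod_eigenvalues[OF charpoly, of s u] \<open>0 < s\<close>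
  by auto

lemma eigenvalues_diag_mat_mult_pos:
  fixes lam \<mu> :: "real^'n::finite" and C :: "real^'n^'n"
  assumes "\<And>i. 0 < lam$i" and "transpose C = C" and "pos_definite C" and "\<And>i. C$i$i = 1"
    and "\<And>t. det (t *\<^sub>R mat 1 - diag_mat lam ** C) = (\<Prod>i\<in>UNIV. t - \<mu>$i)"
  shows "0 < \<mu>$j"
proof (rule ccontr)
  assume "\<not> 0 < \<mu>$j"
  then have "0 < (\<Prod>i\<in>UNIV. - \<mu>$j + 1 * \<mu>$i)"
    using prod_shift_eigenvalues_le(1)[OF assms, of "- \<mu>$j" 1] by simp
  moreover have "(\<Prod>i\<in>UNIV. - \<mu>$j + 1 * \<mu>$i) = 0"
    by (rule prod_zero) auto
  ultimately show False by linarith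
qed

section \<open>Euler's integral for Lauricella's \<open>F_D\<close>\<close>

lemma has_sum_of_exhausting_sums:
  fixes T :: "'a \<Rightarrow> real"
  assumes nonneg: "\<And>i. 0 \<le> T i" and fin: "\<And>M. finite (F M)" and "incseq F"
    and exhaust: "\<And>X. finite X \<Longrightarrow> \<exists>M. X \<subseteq> F M"
    and lim: "(\<lambda>M. sum T (F M)) \<longlonglongrightarrow> L"
  shows "(T has_sum L) UNIV"
proof -
  have "incseq (\<lambda>M. sum T (F M))"
    using \<open>incseq F\<close> fin nonneg by (auto simp: incseq_def intro!: sum_mono2)
  then have F_le: "sum T (F M) \<le> L" for M
    using lim by (rule incseq_le)
  have le: "sum T X \<le> L" if fin_X: "finite X" for X
  proof -
    obtain M where "X \<subseteq> F M" using exhaust[OF fin_X] by blast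
    then have "sum T X \<le> sum T (F M)" using fin nonneg by (intro sum_mono2) auto
    then show ?thesis using F_le[of M] by linarith
  qed
  have bdd: "bdd_above (sum T ` {X. X \<subseteq> UNIV \<and> finite X})"
    using le by (auto intro!: bdd_aboveI)
  have "(T has_sum (SUP X\<in>{X. finite X \<and> X \<subseteq> UNIV}. sum T X)) UNIV"
    using nonneg bdd by (intro nonneg_bdd_above_has_sum) auto
  moreover have "(SUP X\<in>{X. finite X \<and> X \<subseteq> UNIV}. sum T X) = L"
  proof (rule antisym)
    show "(SUP X\<in>{X. finite X \<and> X \<subseteq> UNIV}. sum T X) \<le> L"
      by (rule cSUP_least) (auto intro: le)
    have "sum T (F M) \<le> (SUP X\<in>{X. finite X \<and> X \<subseteq> UNIV}. sum T X)" for M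
      using bdd fin by (intro cSUP_upper) (auto simp: conj_commute)
    then show "L \<le> (SUP X\<in>{X. finite X \<and> X \<subseteq> UNIV}. sum T X)"
      by (intro LIMSEQ_le_const2[OF lim]) auto
  qed
  ultimately show ?thesis by simp
qed

lemma finite_subset_PiE_lessThan:
  fixes X :: "('n::finite \<Rightarrow> nat) set"
  assumes "finite X"
  shows "\<exists>M. X \<subseteq> PiE UNIV (\<lambda>_. {..<M})"
proof
  define M where "M = Suc (Max ((\<lambda>(i, j). i j) ` (X \<times> UNIV)))"
  have "i j < M" if "i \<in> X" for i j
    unfolding M_def using assms that by (intro le_imp_less_Suc Max_ge) auto
  then show "X \<subseteq> PiE UNIV (\<lambda>_. {..<M})" by auto
qed

lemma binomial_series_pochhammer:
  fixes y b :: real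
  assumes "\<bar>y\<bar> < 1"
  shows "(\<lambda>k. pochhammer b k * y ^ k / fact k) sums (1 - y) powr (- b)"
proof -
  have "((- b) gchoose k) * (- y) ^ k = pochhammer b k * y ^ k / fact k" for k
  proof -
    have "((- b) gchoose k) * (- y) ^ k = ((-1) ^ k * (-1) ^ k) * (pochhammer b k * y ^ k / fact k)"
      by (simp add: gbinomial_pochhammer power_minus[of y])
    also have "(-1::real) ^ k * (-1) ^ k = 1" by (simp add: power_mult_distrib[symmetric])
    finally show ?thesis by simp
  qed
  then show ?thesis using gen_binomial_real[of "- y" "- b"] assms by simp
qed

lemma has_integral_Beta_moment:
  fixes a c :: real
  assumes "0 < a" and "a < c"
  shows "((\<lambda>t. t powr (a - 1) * (1 - t) powr (c - a - 1) * t ^ n) has_integral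
           Beta a (c - a) * (pochhammer a n / pochhammer c n)) {0..1}"
proof -
  have Beta: "((\<lambda>t. t powr (a + n - 1) * (1 - t) powr (c - a - 1)) has_integral Beta (a + n) (c - a)) {0..1}"
    using assms by (intro has_integral_Beta_real) auto
  have eq: "t powr (a + n - 1) * (1 - t) powr (c - a - 1) = t powr (a - 1) * (1 - t) powr (c - a - 1) * t ^ n"
    if "t \<in> {0..1}" for t
  proof (cases "t = 0")
    case False
    with that have "t powr (a + n - 1) = t powr (a - 1) * t ^ n"
      by (simp add: powr_add[symmetric] powr_realpow[symmetric] algebra_simps)
    then show ?thesis by simp
  qed simp
  have "a \<notin> \<int>\<^sub>\<le>\<^sub>0" "c \<notin> \<int>\<^sub>\<le>\<^sub>0" using assms by (auto elim!: nonpos_Ints_cases)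
  moreover have "Gamma a > 0" "Gamma c > 0" using assms by (auto intro!: Gamma_real_pos)
  ultimately have "Beta (a + n) (c - a) = Beta a (c - a) * (pochhammer a n / pochhammer c n)"
    by (simp add: Beta_def pochhammer_Gamma add.commute)
  with Beta show ?thesis
    by (metis (no_types, lifting) eq has_integral_cong)
qed

definition lauricella_FD_term ::
    "real \<Rightarrow> ('n::finite \<Rightarrow> real) \<Rightarrow> real \<Rightarrow> ('n \<Rightarrow> real) \<Rightarrow> ('n \<Rightarrow> nat) \<Rightarrow> real" where
  "lauricella_FD_term a b c x i =
     pochhammer a (\<Sum>j\<in>UNIV. i j) / pochhammer c (\<Sum>j\<in>UNIV. i j)
     * (\<Prod>j\<in>UNIV. pochhammer (b j) (i j) * x j ^ i j / fact (i j))"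

lemma lauricella_FD_eq_infsum: "lauricella_FD a b c x = infsum (lauricella_FD_term a b c x) UNIV"
  unfolding lauricella_FD_def lauricella_FD_term_def ..

lemma lauricella_FD_term_nonneg:
  assumes "0 < a" "0 < c" "\<And>j. 0 < b j" "\<And>j. 0 \<le> x j"
  shows "0 \<le> lauricella_FD_term a b c x i"
  unfolding lauricella_FD_term_def using assms
  by (intro mult_nonneg_nonneg divide_nonneg_pos prod_nonneg pochhammer_nonneg pochhammer_pos
      zero_le_power) auto

lemma lauricella_FD_zero_left: "lauricella_FD 0 b c x = 1"
proof -
  have "lauricella_FD_term 0 b c x i = (if i = (\<lambda>_. 0) then 1 else 0)" for i
  proof (cases "i = (\<lambda>_. 0)")
    case False
    then have "(\<Sum>j\<in>UNIV. i j) \<noteq> 0" by auto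
    with False show ?thesis by (simp add: lauricella_FD_term_def pochhammer_0_left)
  qed (simp add: lauricella_FD_term_def)
  then have "infsum (lauricella_FD_term 0 b c x) UNIV = infsum (lauricella_FD_term 0 b c x) {\<lambda>_. 0}"
    by (intro infsum_cong_neutral) auto
  then show ?thesis
    unfolding lauricella_FD_eq_infsum by (simp add: lauricella_FD_term_def)
qed

lemma binomial_partial_sums_pochhammer:
  fixes y b :: real
  assumes "0 \<le> y" and "y < 1" and "0 < b"
  shows "(\<lambda>M. \<Sum>k<M. pochhammer b k * y ^ k / fact k) \<longlonglongrightarrow> (1 - y) powr (- b)"
    and "0 \<le> (\<Sum>k<M. pochhammer b k * y ^ k / fact k)"
    and "(\<Sum>k<M. pochhammer b k * y ^ k / fact k) \<le> (1 - y) powr (- b)"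
proof -
  have sums: "(\<lambda>k. pochhammer b k * y ^ k / fact k) sums (1 - y) powr (- b)"
    using assms by (intro binomial_series_pochhammer) auto
  then show "(\<lambda>M. \<Sum>k<M. pochhammer b k * y ^ k / fact k) \<longlonglongrightarrow> (1 - y) powr (- b)"
    by (simp add: sums_def)
  have nonneg: "0 \<le> pochhammer b k * y ^ k / fact k" for k
    using assms by (simp add: pochhammer_nonneg)
  then show "0 \<le> (\<Sum>k<M. pochhammer b k * y ^ k / fact k)"
    by (intro sum_nonneg)
  show "(\<Sum>k<M. pochhammer b k * y ^ k / fact k) \<le> (1 - y) powr (- b)"
    using sum_le_suminf[OF sums_summable[OF sums], of "{..<M}"] nonneg sums_unique[OF sums] by simp
qed

lemma binomial_partial_products_pochhammer:
  fixes b x :: "'n::finite \<Rightarrow> real"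
  assumes b: "\<And>j. 0 < b j" and x: "\<And>j. 0 \<le> x j" "\<And>j. x j < 1" and t: "t \<in> {0..1}"
  shows "(\<lambda>M. \<Prod>j\<in>UNIV. \<Sum>k<M. pochhammer (b j) k * (x j * t) ^ k / fact k)
           \<longlonglongrightarrow> (\<Prod>j\<in>UNIV. (1 - x j * t) powr (- b j))"
    and "0 \<le> (\<Prod>j\<in>UNIV. \<Sum>k<M. pochhammer (b j) k * (x j * t) ^ k / fact k)"
    and "(\<Prod>j\<in>UNIV. \<Sum>k<M. pochhammer (b j) k * (x j * t) ^ k / fact k)
           \<le> (\<Prod>j\<in>UNIV. (1 - x j) powr (- b j))"
proof -
  have xt: "0 \<le> x j * t" "x j * t < 1" "x j * t \<le> x j" for j
    using t x[of j] by (auto intro: mult_left_le le_less_trans[OF mult_left_le])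
  note partial = binomial_partial_sums_pochhammer[OF xt(1,2) b]
  show "(\<lambda>M. \<Prod>j\<in>UNIV. \<Sum>k<M. pochhammer (b j) k * (x j * t) ^ k / fact k)
      \<longlonglongrightarrow> (\<Prod>j\<in>UNIV. (1 - x j * t) powr (- b j))"
    by (intro tendsto_prod partial(1))
  show "0 \<le> (\<Prod>j\<in>UNIV. \<Sum>k<M. pochhammer (b j) k * (x j * t) ^ k / fact k)"
    using partial(2) by (intro prod_nonneg) auto
  have "(1 - x j * t) powr (- b j) \<le> (1 - x j) powr (- b j)" for j
    using xt[of j] x[of j] b[of j] by (intro powr_mono2') auto
  then show "(\<Prod>j\<in>UNIV. \<Sum>k<M. pochhammer (b j) k * (x j * t) ^ k / fact k)
      \<le> (\<Prod>j\<in>UNIV. (1 - x j) powr (- b j))"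
    using partial(2,3) by (intro prod_mono) (blast intro: order_trans)
qed

lemma has_integral_Euler_truncated:
  fixes b x :: "'n::finite \<Rightarrow> real"
  assumes "0 < a" and "a < c"
  shows "((\<lambda>t. t powr (a - 1) * (1 - t) powr (c - a - 1)
            * (\<Prod>j\<in>UNIV. \<Sum>k<M. pochhammer (b j) k * (x j * t) ^ k / fact k))
          has_integral Beta a (c - a) * sum (lauricella_FD_term a b c x) (PiE UNIV (\<lambda>_. {..<M})))
         {0..1}"
proof -
  define coef where "coef i = (\<Prod>j\<in>UNIV. pochhammer (b j) (i j) * x j ^ i j / fact (i j))"
    for i :: "'n \<Rightarrow> nat"
  have "(\<Prod>j\<in>UNIV. pochhammer (b j) (i j) * (x j * t) ^ i j / fact (i j)) = coef i * t ^ (\<Sum>j\<in>UNIV. i j)"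
    for i t
  proof -
    have "(\<Prod>j\<in>UNIV. pochhammer (b j) (i j) * (x j * t) ^ i j / fact (i j))
        = (\<Prod>j\<in>UNIV. (pochhammer (b j) (i j) * x j ^ i j / fact (i j)) * t ^ i j)"
      by (intro prod.cong refl) (simp add: power_mult_distrib)
    also have "\<dots> = coef i * t ^ (\<Sum>j\<in>UNIV. i j)"
      unfolding coef_def prod.distrib by (simp add: power_sum)
    finally show ?thesis .
  qed
  then have "(\<Prod>j\<in>UNIV. \<Sum>k<M. pochhammer (b j) k * (x j * t) ^ k / fact k)
      = (\<Sum>i\<in>PiE UNIV (\<lambda>_. {..<M}). coef i * t ^ (\<Sum>j\<in>UNIV. i j))" for t
    by (simp add: prod_sum_PiE)
  then have expand: "t powr (a - 1) * (1 - t) powr (c - a - 1)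
      * (\<Prod>j\<in>UNIV. \<Sum>k<M. pochhammer (b j) k * (x j * t) ^ k / fact k)
    = (\<Sum>i\<in>PiE UNIV (\<lambda>_. {..<M}). coef i * (t powr (a - 1) * (1 - t) powr (c - a - 1) * t ^ (\<Sum>j\<in>UNIV. i j)))"
    for t by (simp add: sum_distrib_left mult.left_commute)
  have "((\<lambda>t. \<Sum>i\<in>PiE UNIV (\<lambda>_. {..<M}).
            coef i * (t powr (a - 1) * (1 - t) powr (c - a - 1) * t ^ (\<Sum>j\<in>UNIV. i j)))
        has_integral (\<Sum>i\<in>PiE UNIV (\<lambda>_. {..<M}).
            coef i * (Beta a (c - a) * (pochhammer a (\<Sum>j\<in>UNIV. i j) / pochhammer c (\<Sum>j\<in>UNIV. i j)))))
        {0..1}"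
    by (intro has_integral_sum finite_PiE finite_lessThan has_integral_mult_right
        has_integral_Beta_moment assms) auto
  moreover have "(\<Sum>i\<in>PiE UNIV (\<lambda>_. {..<M}).
      coef i * (Beta a (c - a) * (pochhammer a (\<Sum>j\<in>UNIV. i j) / pochhammer c (\<Sum>j\<in>UNIV. i j))))
    = Beta a (c - a) * sum (lauricella_FD_term a b c x) (PiE UNIV (\<lambda>_. {..<M}))"
    unfolding sum_distrib_left by (intro sum.cong refl) (simp add: lauricella_FD_term_def coef_def)
  ultimately show ?thesis by (simp add: expand)
qed

theorem lauricella_FD_Euler_integral:
  fixes b x :: "'n::finite \<Rightarrow> real"
  assumes a: "0 < a" "a < c" and b: "\<And>j. 0 < b j" and x: "\<And>j. 0 \<le> x j" "\<And>j. x j < 1"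
  shows "((\<lambda>t. t powr (a - 1) * (1 - t) powr (c - a - 1) * (\<Prod>j\<in>UNIV. (1 - x j * t) powr (- b j)))
          has_integral Beta a (c - a) * lauricella_FD a b c x) {0..1}"
proof -
  define w where "w t = t powr (a - 1) * (1 - t) powr (c - a - 1)" for t :: real
  define p where "p M t = (\<Prod>j\<in>UNIV. \<Sum>k<M. pochhammer (b j) k * (x j * t) ^ k / fact k)" for M t
  define h where "h t = (\<Prod>j\<in>UNIV. (1 - x j * t) powr (- b j))" for t :: real
  define H where "H = (\<Prod>j\<in>UNIV. (1 - x j) powr (- b j))"
  define B where "B = Beta a (c - a)"
  define T where "T = lauricella_FD_term a b c x"
  define box where "box M = PiE UNIV (\<lambda>_::'n. {..<M})" for M :: nat
  have B_pos: "0 < B"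
    using a by (simp add: B_def Beta_def Gamma_real_pos)
  have trunc: "((\<lambda>t. w t * p M t) has_integral B * sum T (box M)) {0..1}" for M
    unfolding w_def p_def B_def T_def box_def by (rule has_integral_Euler_truncated[OF a])
  have w_int: "(w has_integral B) {0..1}"
    using has_integral_Beta_moment[OF a, of 0] by (simp add: w_def[abs_def] B_def)
  have p_bounds: "0 \<le> p M t" "p M t \<le> H" if "t \<in> {0..1}" for M t
    unfolding p_def H_def using binomial_partial_products_pochhammer(2,3)[of b x t M] b x that by auto
  have p_lim: "(\<lambda>M. p M t) \<longlonglongrightarrow> h t" if "t \<in> {0..1}" for t
    unfolding p_def h_def using binomial_partial_products_pochhammer(1)[of b x t] b x that by auto
  have trunc_int: "(\<lambda>t. w t * p M t) integrable_on {0..1}" for M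
    using trunc by blast
  have dom_int: "(\<lambda>t. H * w t) integrable_on {0..1}"
    using has_integral_mult_right[OF w_int] by blast
  have dom: "norm (w t * p M t) \<le> H * w t" if "t \<in> {0..1}" for M t
    using p_bounds[OF that] by (simp add: w_def abs_mult mult.commute mult_right_mono)
  have conv: "(\<lambda>M. w t * p M t) \<longlonglongrightarrow> w t * h t" if "t \<in> {0..1}" for t
    using p_lim[OF that] by (rule tendsto_mult_left)
  note dc = dominated_convergence[OF trunc_int dom_int dom conv]
  define I where "I = integral {0..1} (\<lambda>t. w t * h t)"
  have I: "((\<lambda>t. w t * h t) has_integral I) {0..1}"
    unfolding I_def using dc(1) by (rule integrable_integral)
  have lim: "(\<lambda>M. B * sum T (box M)) \<longlonglongrightarrow> I"
    using dc(2) unfolding I_def integral_unique[OF trunc] .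
  have "(T has_sum I / B) UNIV"
  proof (rule has_sum_of_exhausting_sums)
    show "0 \<le> T i" for i
      unfolding T_def using a b x by (intro lauricella_FD_term_nonneg) auto
    show "finite (box M)" for M by (simp add: box_def finite_PiE)
    show "incseq box"
      by (auto simp: incseq_def box_def PiE_def Pi_def intro: less_le_trans)
    show "\<exists>M. X \<subseteq> box M" if "finite X" for X
      unfolding box_def by (rule finite_subset_PiE_lessThan[OF that])
    show "(\<lambda>M. sum T (box M)) \<longlonglongrightarrow> I / B"
      using tendsto_divide[OF lim tendsto_const[of B]] B_pos by simp
  qed
  then have "lauricella_FD a b c x = I / B"
    unfolding lauricella_FD_eq_infsum T_def by (rule infsumI)
  with I B_pos show ?thesis
    by (simp add: w_def h_def B_def)
qed

section \<open>Coverage probability\<close>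

lemma powr_rescale_shift:
  fixes l t r :: real
  assumes "0 < l" and "t \<le> 1"
  shows "(1 / (l + 1)) powr r * (1 - t / (l + 1)) powr (- r) = (1 - t + l) powr (- r)"
proof -
  have "(1 / (l + 1)) powr r * (1 - t / (l + 1)) powr (- r) = (1 / (l + 1) / (1 - t / (l + 1))) powr r"
    by (simp add: powr_minus_divide powr_divide powr_mult)
  also have "1 / (l + 1) / (1 - t / (l + 1)) = 1 / (1 - t + l)"
    using assms by (simp add: field_simps)
  also have "(1 / (1 - t + l)) powr r = (1 - t + l) powr (- r)"
    by (simp add: powr_minus_divide powr_divide)
  finally show ?thesis .
qed

lemma coverage_eq_integral:
  fixes mc m k :: real and lam :: "real^'n::finite"
  assumes mc: "0 < mc" and m: "0 < m" "m < 1" and k: "0 < k" and lam: "\<And>j. 0 < lam$j"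
  shows "((\<lambda>t. t powr (- m) * (1 - t) powr (real CARD('n) * mc + m - 1)
            * (\<Prod>j\<in>UNIV. 1 - t + k * m * lam$j) powr (- mc))
          has_integral Gamma m * Gamma (1 - m) * coverage mc m k lam) {0..1}"
proof -
  define x where "x j = 1 / (k * m * lam$j + 1)" for j
  define P where "P = (\<Prod>j\<in>UNIV. x j powr mc)"
  define c where "c = real CARD('n) * mc + 1"
  have klam: "0 < k * m * lam$j" for j using k m lam[of j] by simp
  have x: "0 \<le> x j" "x j < 1" for j using klam[of j] by (auto simp: x_def)
  have "0 < real CARD('n) * mc" using mc by simp
  then have a: "0 < 1 - m" "1 - m < c" using m by (auto simp: c_def)
  from lauricella_FD_Euler_integral[OF a, of "\<lambda>_. mc" x, OF mc x]
  have HI: "((\<lambda>t. P * (t powr (- m) * (1 - t) powr (c - (1 - m) - 1)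
            * (\<Prod>j\<in>UNIV. (1 - x j * t) powr (- mc))))
        has_integral P * (Beta (1 - m) (c - (1 - m)) * lauricella_FD (1 - m) (\<lambda>_. mc) c x)) {0..1}"
    by (intro has_integral_mult_right) simp
  have pt: "P * (\<Prod>j\<in>UNIV. (1 - x j * t) powr (- mc)) = (\<Prod>j\<in>UNIV. 1 - t + k * m * lam$j) powr (- mc)"
    if t: "t \<in> {0..1}" for t
  proof -
    have "x j powr mc * (1 - x j * t) powr (- mc) = (1 - t + k * m * lam$j) powr (- mc)" for j
      using powr_rescale_shift[OF klam[of j], of t mc] t by (simp add: x_def)
    then have "P * (\<Prod>j\<in>UNIV. (1 - x j * t) powr (- mc)) = (\<Prod>j\<in>UNIV. (1 - t + k * m * lam$j) powr (- mc))"
      unfolding P_def prod.distrib[symmetric] by simp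
    also have "\<dots> = (\<Prod>j\<in>UNIV. 1 - t + k * m * lam$j) powr (- mc)"
      by (rule prod_powr_distrib[symmetric])
    finally show ?thesis .
  qed
  have val: "P * (Beta (1 - m) (c - (1 - m)) * lauricella_FD (1 - m) (\<lambda>_. mc) c x)
      = Gamma m * Gamma (1 - m) * coverage mc m k lam"
  proof -
    have "coverage mc m k lam
        = Gamma (c - (1 - m)) / (Gamma c * Gamma m) * P * lauricella_FD (1 - m) (\<lambda>_. mc) c x"
      unfolding coverage_def P_def x_def[abs_def] c_def by simp
    moreover have "Gamma m > 0" "Gamma c > 0" using m a by (auto intro!: Gamma_real_pos)
    ultimately show ?thesis by (simp add: Beta_def field_simps)
  qed
  have "c - (1 - m) - 1 = real CARD('n) * mc + m - 1" by (simp add: c_def)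
  then show ?thesis
  proof (intro iffD1[OF has_integral_cong HI[unfolded val]])
    fix t :: real assume "t \<in> {0..1}"
    have "P * (u * v * q) = u * v * (P * q)" for u v q :: real by (simp only: mult_ac)
    with pt[OF \<open>t \<in> {0..1}\<close>] \<open>c - (1 - m) - 1 = _\<close>
    show "P * (t powr (- m) * (1 - t) powr (c - (1 - m) - 1) * (\<Prod>j\<in>UNIV. (1 - x j * t) powr (- mc)))
      = t powr (- m) * (1 - t) powr (real CARD('n) * mc + m - 1)
        * (\<Prod>j\<in>UNIV. 1 - t + k * m * lam$j) powr (- mc)" by simp
  qed

qed

lemma coverage_one:
  fixes mc k :: real and lam :: "real^'n::finite"
  assumes "0 < mc" and "0 < k" and "\<And>j. 0 < lam$j"
  shows "coverage mc 1 k lam = (\<Prod>j\<in>UNIV. 1 + k * lam$j) powr (- mc)"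
proof -
  have "Gamma (real CARD('n) * mc + 1) \<noteq> 0"
    using assms by (intro Gamma_real_pos[THEN less_imp_neq, symmetric] add_nonneg_pos) auto
  then have "coverage mc 1 k lam = (\<Prod>j\<in>UNIV. (1 / (k * lam$j + 1)) powr mc)"
    unfolding coverage_def by (simp add: lauricella_FD_zero_left)
  also have "\<dots> = (\<Prod>j\<in>UNIV. (1 + k * lam$j) powr (- mc))"
    by (simp add: powr_minus_divide powr_divide add.commute)
  also have "\<dots> = (\<Prod>j\<in>UNIV. 1 + k * lam$j) powr (- mc)"
    by (rule prod_powr_distrib[symmetric])
  finally show ?thesis .
qed

lemma coverage_antimono:
  fixes lam lam' :: "real^'n::finite"
  assumes mc: "0 < mc" and m: "0 < m" "m \<le> 1" and k: "0 < k"
    and lam: "\<And>j. 0 < lam$j" and lam': "\<And>j. 0 < lam'$j"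
    and le: "\<And>u. 0 \<le> u \<Longrightarrow> (\<Prod>j\<in>UNIV. u + k * m * lam'$j) \<le> (\<Prod>j\<in>UNIV. u + k * m * lam$j)"
  shows "coverage mc m k lam \<le> coverage mc m k lam'"
proof -
  have powr_le: "(\<Prod>j\<in>UNIV. u + k * m * lam$j) powr (- mc) \<le> (\<Prod>j\<in>UNIV. u + k * m * lam'$j) powr (- mc)"
    if "0 \<le> u" for u
  proof (rule powr_mono2')
    show "0 < (\<Prod>j\<in>UNIV. u + k * m * lam'$j)"
      using that k m lam' by (intro prod_pos add_nonneg_pos) auto
  qed (use le[OF that] mc in auto)
  show ?thesis
  proof (cases "m = 1")
    case True
    then show ?thesis
      using powr_le[of 1] coverage_one[OF mc k lam] coverage_one[OF mc k lam'] by simp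
  next
    case False
    with m have "m < 1" by simp
    have "Gamma m * Gamma (1 - m) * coverage mc m k lam \<le> Gamma m * Gamma (1 - m) * coverage mc m k lam'"
    proof (rule has_integral_le[OF coverage_eq_integral[OF mc m(1) \<open>m < 1\<close> k lam]
          coverage_eq_integral[OF mc m(1) \<open>m < 1\<close> k lam']])
      fix t :: real assume "t \<in> {0..1}"
      then show "t powr (- m) * (1 - t) powr (real CARD('n) * mc + m - 1) * (\<Prod>j\<in>UNIV. 1 - t + k * m * lam$j) powr (- mc)
        \<le> t powr (- m) * (1 - t) powr (real CARD('n) * mc + m - 1) * (\<Prod>j\<in>UNIV. 1 - t + k * m * lam'$j) powr (- mc)"
        using powr_le[of "1 - t"] by (intro mult_left_mono) auto
    qed
    moreover have "0 < Gamma m * Gamma (1 - m)"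
      using m \<open>m < 1\<close> by (intro mult_pos_pos Gamma_real_pos) auto
    ultimately show ?thesis by (meson mult_le_cancel_left_pos)
  qed
qed

theorem theorem6:
  fixes mc m k :: real and lam lamhat :: "real^'n::finite" and C :: "real^'n^'n"
  assumes mc: "mc > 0" and m: "0 < m" "m \<le> 1" and k: "k > 0"
    and lam_pos: "\<forall>i. lam$i > 0"
    and C_sym: "transpose C = C"
    and C_pd: "\<forall>x::real^'n. x \<noteq> 0 \<longrightarrow> x \<bullet> (C *v x) > 0"
    and C_diag: "\<forall>i. C$i$i = 1"
    and eig: "\<forall>t::real. det (t *\<^sub>R mat 1 - diag_mat lam ** C) = (\<Prod>i\<in>UNIV. t - lamhat$i)"
  shows "coverage mc m k lamhat \<ge> coverage mc m k lam"
proof -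
  note hyps = lam_pos[rule_format] C_sym C_pd[folded pos_definite_def] C_diag[rule_format] eig[rule_format]
  have "0 < k * m" using k m by simp
  show ?thesis
  proof (rule coverage_antimono[OF mc m k])
    show "0 < lam$j" "0 < lamhat$j" for j
      using hyps eigenvalues_diag_mat_mult_pos[OF hyps] by auto
    show "(\<Prod>j\<in>UNIV. u + k * m * lamhat$j) \<le> (\<Prod>j\<in>UNIV. u + k * m * lam$j)" if "0 \<le> u" for u
      using prod_shift_eigenvalues_le(2)[OF hyps that \<open>0 < k * m\<close>] by (simp add: mult.assoc)
  qed
qed

end
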